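(* Let $\Bbbk$ be an algebraically closed field of characteristic zero and let $\pi$ be a pyramid with row lengths $p_1\le\dots\le p_{m+n}$ (set $p_0=0$), with $|i|\in\{0,1\}$ the label of row $i$. For $2\le i\le m+n$ let $s_{i,i-1}$ be the left indentation of row $i-1$ relative to row $i$. Given $a_i^{(r)}\in\Bbbk$ for $1\le i\le m+n$ and $1\le r\le p_i-p_{i-1}$, there exist $b_{i,j}\in\Bbbk$ for $1\le i\le m+n$, $1\le j\le p_i$, such that $$b_{i,s_{i,i-1}+r}=b_{i-1,r}\quad\text{for }1\le r\le p_{i-1},$$ $$e_r\big((-1)^{|i|}b_{i,1},\dots,(-1)^{|i|}b_{i,p_i}\big)=(-1)^{r|i|}a_i^{(r)}\quad\text{for }1\le r\le p_i-p_{i-1},$$ where $e_r$ is the $r$-th elementary symmetric polynomial.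
   Context: A pyramid $\pi$ with row lengths $p_1\le\dots\le p_{m+n}$ is a diagram with rows $1,\dots,m+n$ numbered top to bottom, row $i$ consisting of $p_i$ consecutive boxes, such that every box not in the bottom row lies directly above a box of the row beneath. Each row is labelled "$+$" ($|i|=0$) or "$-$" ($|i|=1$), with $m$ rows of the first kind and $n$ of the second. The left indentation $s_{i,i-1}$ is the number of boxes of row $i$ lying strictly to the left of the leftmost box of row $i-1$. *)

theory Defs
  imports "HOL-Computational_Algebra.Polynomial"
begin

definition alg_closed_type :: "'a::field itself \<Rightarrow> bool" where
  "alg_closed_type _ \<longleftrightarrow> (\<forall>q :: 'a poly. 0 < degree q \<longrightarrow> (\<exists>x. poly q x = 0))"

definition esym :: "nat \<Rightarrow> (nat \<Rightarrow> 'a::comm_ring_1) \<Rightarrow> nat \<Rightarrow> 'a" where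
  "esym r x k = (\<Sum>S \<in> {S. S \<subseteq> {1..k} \<and> card S = r}. \<Prod>j\<in>S. x j)"

text \<open>A pyramid with rows 1..N (top to bottom), row i of length p i occupying the
  columns lft i + 1, ..., lft i + p i. Each box of row i-1 lies above a box of row i.\<close>
definition is_pyramid :: "nat \<Rightarrow> (nat \<Rightarrow> nat) \<Rightarrow> (nat \<Rightarrow> int) \<Rightarrow> bool" where
  "is_pyramid N p lft \<longleftrightarrow>
     (\<forall>i\<in>{1..N}. 0 < p i) \<and>
     (\<forall>i\<in>{2..N}. p (i-1) \<le> p i \<and> lft i \<le> lft (i-1) \<and>
        lft (i-1) + int (p (i-1)) \<le> lft i + int (p i))"

definition left_indent :: "(nat \<Rightarrow> int) \<Rightarrow> nat \<Rightarrow> nat" where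
  "left_indent lft i = nat (lft (i-1) - lft i)"

definition rowlen0 :: "(nat \<Rightarrow> nat) \<Rightarrow> nat \<Rightarrow> nat" where
  "rowlen0 p i = (if i = 0 then 0 else p i)"

end

theory Submission imports Defs begin

text \<open>
  The rows can be filled one at a time from the top.  The generating polynomial
  \<open>\<Prod>\<^sub>j (1 + b\<^sub>i\<^sub>,\<^sub>j t)\<close> of row \<open>i\<close> has the values inherited from row \<open>i - 1\<close> as a
  factor \<open>C\<close> with constant term 1; since \<open>C\<close> is invertible as a power series, one can
  choose a cofactor \<open>Y\<close> of degree at most \<open>p\<^sub>i - p\<^sub>i\<^sub>-\<^sub>1\<close> and constant term 1 such that
  \<open>C Y\<close> has the prescribed coefficients in degrees \<open>1, \<dots>, p\<^sub>i - p\<^sub>i\<^sub>-\<^sub>1\<close>.  Over an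
  algebraically closed field \<open>Y\<close> splits into factors \<open>1 + y t\<close>, whose \<open>y\<close> fill the free
  boxes of row \<open>i\<close>.  The signs \<open>(-1)\<^bsup>|i|\<^esup>\<close> only rescale the elementary symmetric
  functions by \<open>(-1)\<^bsup>r|i|\<^esup>\<close>.
\<close>

lemma prod_monom_1:
  fixes x :: "nat \<Rightarrow> 'a::comm_ring_1"
  assumes "finite B"
  shows "(\<Prod>j\<in>B. monom (x j) 1) = monom (\<Prod>j\<in>B. x j) (card B)"
  using assms by (induction B rule: finite_induct) (auto simp: mult_monom)

lemma esym_eq_coeff_prod:
  fixes x :: "nat \<Rightarrow> 'a::comm_ring_1"
  shows "esym r x k = coeff (\<Prod>j\<in>{1..k}. [:1, x j:]) r"
proof -
  have linear: "[:1, x j:] = monom (x j) 1 + 1" for j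
    by (auto intro!: poly_eqI simp: coeff_monom coeff_pCons split: nat.split)
  have "(\<Prod>j\<in>{1..k}. [:1, x j:]) = (\<Sum>B\<in>Pow {1..k}. monom (\<Prod>j\<in>B. x j) (card B))"
    unfolding linear prod_add[OF finite_atLeastAtMost]
    by (intro sum.cong refl) (metis PowD finite_atLeastAtMost finite_subset prod_monom_1 mult_1_right prod.neutral_const)
  then have "coeff (\<Prod>j\<in>{1..k}. [:1, x j:]) r
      = (\<Sum>B\<in>Pow {1..k}. if card B = r then \<Prod>j\<in>B. x j else 0)"
    by (simp add: coeff_sum coeff_monom)
  also have "\<dots> = (\<Sum>B\<in>{B\<in>Pow {1..k}. card B = r}. \<Prod>j\<in>B. x j)"
    by (subst sum.inter_filter[symmetric]) auto
  also have "\<dots> = esym r x k"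
    unfolding esym_def by (rule sum.cong) auto
  finally show ?thesis by simp
qed

lemma esym_scale:
  fixes x :: "nat \<Rightarrow> 'a::comm_ring_1"
  shows "esym r (\<lambda>j. u * x j) k = u ^ r * esym r x k"
  unfolding esym_def by (auto simp: sum_distrib_left prod.distrib intro!: sum.cong)

lemma coeff_0_one_root_factor:
  fixes Y :: "'a::field poly"
  assumes "coeff Y 0 = 1" and "poly Y z = 0"
  obtains Q where "Y = [:1, -1/z:] * Q" and "coeff Q 0 = 1" and "degree Q = degree Y - 1"
proof -
  have "z \<noteq> 0"
    using assms by (auto simp: poly_0_coeff_0)
  obtain R where R: "Y = [:-z, 1:] * R"
    using assms(2) poly_eq_0_iff_dvd by (metis dvdE)
  define Q where "Q = smult (-z) R"
  have Y_eq: "Y = [:1, -1/z:] * Q"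
    using R \<open>z \<noteq> 0\<close> by (simp add: Q_def mult.commute)
  moreover have "coeff Q 0 = 1"
    using assms(1) Y_eq by (simp add: coeff_mult)
  moreover have "R \<noteq> 0"
    using R assms(1) by auto
  then have "degree Y = degree [:-z, 1:] + degree R"
    unfolding R by (intro degree_mult_eq) auto
  then have "degree Y = degree Q + 1"
    using \<open>z \<noteq> 0\<close> by (simp add: Q_def)
  ultimately show thesis
    using that by simp
qed

lemma alg_closed_split_coeff_0_one:
  fixes Y :: "'a::field poly"
  assumes "alg_closed_type TYPE('a)"
    and "finite F" and "degree Y \<le> card F" and "coeff Y 0 = 1"
  shows "\<exists>y. Y = (\<Prod>j\<in>F. [:1, y j:])"
  using assms(2-4)
proof (induction F arbitrary: Y rule: finite_induct)
  case empty
  then show ?case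
    by (metis degree_0_id le_zero_eq one_pCons prod.empty card.empty)
next
  case (insert j0 F)
  have "\<exists>w Q. Y = [:1, w:] * Q \<and> degree Q \<le> card F \<and> coeff Q 0 = 1"
  proof (cases "degree Y \<le> card F")
    case True
    then show ?thesis
      using insert.prems(2) by (intro exI[of _ 0] exI[of _ Y]) simp
  next
    case False
    then obtain z where "poly Y z = 0"
      using assms(1) unfolding alg_closed_type_def by (metis zero_less_iff_neq_zero le0)
    then obtain Q where "Y = [:1, -1/z:] * Q" "coeff Q 0 = 1" "degree Q = degree Y - 1"
      using coeff_0_one_root_factor insert.prems(2) by blast
    moreover have "degree Y - 1 \<le> card F"
      using insert.prems(1) insert.hyps by simp
    ultimately show ?thesis
      by (metis (no_types))
  qed
  then obtain w Q where Q: "Y = [:1, w:] * Q" "degree Q \<le> card F" "coeff Q 0 = 1"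
    by blast
  then obtain y where "Q = (\<Prod>j\<in>F. [:1, y j:])"
    using insert.IH by blast
  then have "(\<Prod>j\<in>F. [:1, (y(j0 := w)) j:]) = Q"
    using insert.hyps by (auto intro!: prod.cong)
  then have "Y = (\<Prod>j\<in>insert j0 F. [:1, (y(j0 := w)) j:])"
    using Q(1) insert.hyps by simp
  then show ?case by blast
qed

lemma exists_cofactor_low_coeffs:
  fixes C :: "'a::field poly" and a :: "nat \<Rightarrow> 'a"
  assumes "coeff C 0 = 1"
  shows "\<exists>Y. degree Y \<le> k \<and> coeff Y 0 = 1 \<and> (\<forall>r\<in>{1..k}. coeff (C * Y) r = a r)"
proof (induction k)
  case 0
  show ?case by (rule exI[of _ 1]) auto
next
  case (Suc k)
  then obtain Y where Y: "degree Y \<le> k" "coeff Y 0 = 1" "\<forall>r\<in>{1..k}. coeff (C * Y) r = a r"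
    by blast
  define d where "d = a (Suc k) - coeff (C * Y) (Suc k)"
  define Y' where "Y' = Y + monom d (Suc k)"
  have "degree Y' \<le> Suc k"
    unfolding Y'_def using Y(1) by (meson degree_add_le degree_monom_le le_SucI)
  moreover have "coeff Y' 0 = 1"
    using Y(2) by (simp add: Y'_def)
  moreover have "coeff (C * Y') r = a r" if "r \<in> {1..Suc k}" for r
  proof -
    have "C * Y' = C * Y + monom d (Suc k) * C"
      by (simp add: Y'_def algebra_simps)
    then have "coeff (C * Y') r = coeff (C * Y) r + (if r < Suc k then 0 else d * coeff C (r - Suc k))"
      by (simp add: coeff_monom_mult)
    then show ?thesis
      using that Y(3) assms by (cases "r = Suc k") (auto simp: d_def)
  qed
  ultimately show ?case by blast
qed

lemma alg_closed_extend_row: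
  fixes c a :: "nat \<Rightarrow> 'a::field"
  assumes "alg_closed_type TYPE('a)" and "s + q \<le> k"
  shows "\<exists>x. (\<forall>r\<in>{1..q}. x (s + r) = c r) \<and> (\<forall>r\<in>{1..k - q}. esym r x k = a r)"
proof -
  define fixed where "fixed = {s + 1..s + q}"
  define free where "free = {1..k} - fixed"
  define C where "C = (\<Prod>j\<in>fixed. [:1, c (j - s):])"
  have "coeff C 0 = 1"
    unfolding C_def poly_0_coeff_0[symmetric] by (simp add: poly_prod)
  then obtain Y where Y: "degree Y \<le> k - q" "coeff Y 0 = 1"
      "\<forall>r\<in>{1..k - q}. coeff (C * Y) r = a r"
    using exists_cofactor_low_coeffs by blast
  have fixed_sub: "fixed \<subseteq> {1..k}"
    using assms(2) unfolding fixed_def by auto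
  then have "card free = k - q"
    by (simp add: free_def card_Diff_subset fixed_def)
  then have "degree Y \<le> card free"
    using Y(1) by simp
  moreover have "finite free"
    by (simp add: free_def)
  ultimately obtain y where y: "Y = (\<Prod>j\<in>free. [:1, y j:])"
    using alg_closed_split_coeff_0_one[OF assms(1) _ _ Y(2)] by blast
  define x where "x j = (if j \<in> fixed then c (j - s) else y j)" for j
  have "(\<Prod>j\<in>fixed. [:1, x j:]) = C"
    unfolding C_def x_def by (rule prod.cong) auto
  moreover have "(\<Prod>j\<in>free. [:1, x j:]) = Y"
    unfolding y x_def free_def by (rule prod.cong) auto
  moreover have "(\<Prod>j\<in>{1..k}. [:1, x j:]) = (\<Prod>j\<in>free. [:1, x j:]) * (\<Prod>j\<in>fixed. [:1, x j:])"
    unfolding free_def by (rule prod.subset_diff[OF fixed_sub finite_atLeastAtMost])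
  ultimately have "(\<Prod>j\<in>{1..k}. [:1, x j:]) = C * Y"
    by (simp add: mult.commute)
  then have "\<forall>r\<in>{1..k - q}. esym r x k = a r"
    using Y(3) by (simp add: esym_eq_coeff_prod)
  moreover have "\<forall>r\<in>{1..q}. x (s + r) = c r"
    by (simp add: x_def fixed_def)
  ultimately show ?thesis by blast
qed

lemma is_pyramid_indent_fits:
  assumes "is_pyramid N p lft" and "i \<in> {2..N}"
  shows "left_indent lft i + p (i - 1) \<le> p i"
proof -
  have "lft i \<le> lft (i - 1)" and "lft (i - 1) + int (p (i - 1)) \<le> lft i + int (p i)"
    using assms unfolding is_pyramid_def by blast+
  then have "int (left_indent lft i + p (i - 1)) \<le> int (p i)"
    unfolding left_indent_def by simp
  then show ?thesis
    by linarith
qed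

lemma alg_closed_fill_rows:
  fixes a :: "nat \<Rightarrow> nat \<Rightarrow> 'a::field"
  assumes "alg_closed_type TYPE('a)"
    and "\<forall>i\<in>{2..N}. left_indent lft i + p (i - 1) \<le> p i"
  shows "\<exists>b. (\<forall>i\<in>{2..N}. \<forall>r\<in>{1..p (i - 1)}. b i (left_indent lft i + r) = b (i - 1) r) \<and>
    (\<forall>i\<in>{1..N}. \<forall>r\<in>{1..p i - rowlen0 p (i - 1)}. esym r (b i) (p i) = a i r)"
  using assms(2)
proof (induction N)
  case 0
  show ?case by auto
next
  case (Suc N)
  have "\<forall>i\<in>{2..N}. left_indent lft i + p (i - 1) \<le> p i"
    using Suc.prems by simp
  then obtain b where
    b_glue: "\<forall>i\<in>{2..N}. \<forall>r\<in>{1..p (i - 1)}. b i (left_indent lft i + r) = b (i - 1) r" and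
    b_esym: "\<forall>i\<in>{1..N}. \<forall>r\<in>{1..p i - rowlen0 p (i - 1)}. esym r (b i) (p i) = a i r"
    using Suc.IH by blast
  define s where "s = (if N = 0 then 0 else left_indent lft (Suc N))"
  have "s + rowlen0 p N \<le> p (Suc N)"
    using bspec[OF Suc.prems, of "Suc N"] by (auto simp: s_def rowlen0_def)
  then obtain x where
    x_glue: "\<forall>r\<in>{1..rowlen0 p N}. x (s + r) = b N r" and
    x_esym: "\<forall>r\<in>{1..p (Suc N) - rowlen0 p N}. esym r x (p (Suc N)) = a (Suc N) r"
    using alg_closed_extend_row[OF assms(1)] by blast
  define b' where "b' = b(Suc N := x)"
  have "b' i (left_indent lft i + r) = b' (i - 1) r"
    if "i \<in> {2..Suc N}" and "r \<in> {1..p (i - 1)}" for i r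
  proof (cases "i = Suc N")
    case True
    then show ?thesis
      using that x_glue by (simp add: b'_def s_def rowlen0_def)
  next
    case False
    then show ?thesis
      using that b_glue by (auto simp: b'_def)
  qed
  moreover have "esym r (b' i) (p i) = a i r"
    if "i \<in> {1..Suc N}" and "r \<in> {1..p i - rowlen0 p (i - 1)}" for i r
  proof (cases "i = Suc N")
    case True
    then show ?thesis
      using that x_esym by (simp add: b'_def)
  next
    case False
    then show ?thesis
      using that b_esym by (simp add: b'_def)
  qed
  ultimately show ?case by blast
qed

theorem mainTheorem9:
  fixes m n :: nat
    and p :: "nat \<Rightarrow> nat" and lft :: "nat \<Rightarrow> int" and lab :: "nat \<Rightarrow> nat"
    and a :: "nat \<Rightarrow> nat \<Rightarrow> 'k::field_char_0"
  assumes closed: "alg_closed_type TYPE('k)"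
    and pyr: "is_pyramid (m+n) p lft"
    and labs: "\<forall>i\<in>{1..m+n}. lab i \<in> {0,1}"
    and cnt0: "card {i\<in>{1..m+n}. lab i = 0} = m"
    and cnt1: "card {i\<in>{1..m+n}. lab i = 1} = n"
  shows "\<exists>b :: nat \<Rightarrow> nat \<Rightarrow> 'k.
     (\<forall>i\<in>{2..m+n}. \<forall>r\<in>{1..p (i-1)}. b i (left_indent lft i + r) = b (i-1) r) \<and>
     (\<forall>i\<in>{1..m+n}. \<forall>r\<in>{1..p i - rowlen0 p (i-1)}.
        esym r (\<lambda>j. (-1)^(lab i) * b i j) (p i) = (-1)^(r * lab i) * a i r)"
proof -
  obtain b :: "nat \<Rightarrow> nat \<Rightarrow> 'k" where
    glue: "\<forall>i\<in>{2..m+n}. \<forall>r\<in>{1..p (i-1)}. b i (left_indent lft i + r) = b (i-1) r" and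
    esym_b: "\<forall>i\<in>{1..m+n}. \<forall>r\<in>{1..p i - rowlen0 p (i-1)}.
      esym r (b i) (p i) = a i r"
    using alg_closed_fill_rows[OF closed, of "m+n" lft p a]
      is_pyramid_indent_fits[OF pyr] by blast
  have "esym r (\<lambda>j. (-1)^(lab i) * b i j) (p i) = (-1)^(r * lab i) * esym r (b i) (p i)" for i r
    by (subst esym_scale) (metis power_mult mult.commute)
  then show ?thesis
    using glue esym_b by (intro exI[of _ b]) simp
qed

end
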